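(* For each even integer $c\ge2$, let $p_0=p_0(c)$ be the smallest possible output of the Gauss–Legendre distribution $\mathcal{P}_c$. Then $\lim_{c\to\infty}\sigma(p_0)/c=1/j_1$ (limit over even $c$), where $\sigma(p)=\sqrt{(1-p)/p}$ and $j_1$ is the smallest positive zero of the Bessel function $J_0(t)=\sum_{i\ge0}(-1)^i(t/2)^{2i}/(i!)^2$.
   Context: Gauss–Legendre distribution: for $c=2\nu$, let $\widetilde{L}_\nu(t)=\left.\left(\frac{d}{du}\right)^{\nu}(u^2-1)^{\nu}\right|_{u=2t-1}$; $\mathcal{P}_c$ takes as values the $\nu$ zeroes $p$ of $\widetilde L_\nu$ (all in $(0,1)$), each with probability proportional to $\bigl((p(1-p))^{3/2}\widetilde L_\nu{}'(p)^2\bigr)^{-1}$. Thus $p_0$ is the smallest zero of $\widetilde L_\nu$. *)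

theory Defs
  imports "HOL-Analysis.Analysis" "HOL-Computational_Algebra.Polynomial"
begin

definition rodrigues_poly :: "nat \<Rightarrow> real poly" where
  "rodrigues_poly \<nu> = (pderiv ^^ \<nu>) ([:-1, 0, 1:] ^ \<nu>)"

definition shifted_legendre :: "nat \<Rightarrow> real \<Rightarrow> real" where
  "shifted_legendre \<nu> t = poly (rodrigues_poly \<nu>) (2 * t - 1)"

text \<open>Gauss-Legendre distribution P_c for c = 2 nu: support = zeros of L~_nu,
  each with the stated positive weight.\<close>
definition gl_weight :: "nat \<Rightarrow> real \<Rightarrow> real" where
  "gl_weight \<nu> p = 1 / ((p * (1 - p)) powr (3/2) * (deriv (shifted_legendre \<nu>) p)\<^sup>2)"

definition gl_support :: "nat \<Rightarrow> real set" where
  "gl_support \<nu> = {p. shifted_legendre \<nu> p = 0}"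

definition p0 :: "nat \<Rightarrow> real" where
  "p0 c = Min {p \<in> gl_support (c div 2). gl_weight (c div 2) p > 0}"

definition sigma :: "real \<Rightarrow> real" where
  "sigma p = sqrt ((1 - p) / p)"

definition bessel_J0 :: "real \<Rightarrow> real" where
  "bessel_J0 t = (\<Sum>i. (-1) ^ i * (t / 2) ^ (2 * i) / (fact i)\<^sup>2)"

definition j1 :: real where
  "j1 = Inf {t. t > 0 \<and> bessel_J0 t = 0}"

end

(*
  Expanding Rodrigues' formula gives
    L~_nu(t) = (-2)^nu * sum_k C(nu,k) (nu+k)!/k! (-t)^k,
  and the substitution t = y/nu^2 turns this into
    L~_nu(y/nu^2) = (-2)^nu nu! * sum_k e(nu,k) (-y)^k/(k!)^2,
  where e(nu,k) = prod_{j<k} (nu-j)(nu+1+j)/nu^2 differs from 1 by at most 16^k/nu.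
  Hence the rescaled polynomial tends to H(y) = sum_k (-y)^k/(k!)^2 = J_0(2 sqrt y), and its
  derivative tends to H' uniformly on [0,2]. On [0,2] we have H' <= -5/18 and H(2) < 0, so H has
  a single zero x there, and j1 = 2 sqrt x. For large nu the rescaled polynomial is positive on
  (-inf,0], strictly decreasing on [0,2] and changes sign near x; so its smallest zero is simple,
  i.e. has positive weight, and nu^2 p0 tends to x. Finally
  sigma(p0)/(2 nu) = sqrt((1 - p0)/(nu^2 p0))/2 tends to 1/(2 sqrt x) = 1/j1.
*)

theory Submission
  imports Defs
begin

section \<open>Explicit coefficients of the shifted Legendre polynomials\<close>

lemma higher_pderiv_pcompose_shift:
  "(pderiv ^^ n) p \<circ>\<^sub>p [:a, 1:] = (pderiv ^^ n) (p \<circ>\<^sub>p [:a, 1::'a::idom:])"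
proof (induction n)
  case (Suc n)
  have "pderiv ((pderiv ^^ n) p \<circ>\<^sub>p [:a, 1:]) = pderiv ((pderiv ^^ n) p) \<circ>\<^sub>p [:a, 1:]"
    by (simp add: pderiv_pcompose pderiv_pCons)
  with Suc show ?case by simp
qed simp

lemma pcompose_power_left: "p ^ n \<circ>\<^sub>p q = (p \<circ>\<^sub>p q) ^ n"
  for p q :: "'a::idom poly"
  by (induction n) (simp_all add: pcompose_mult pcompose_1)

lemma higher_pderiv_monom_add:
  "(pderiv ^^ n) (monom c (n + k)) = monom (pochhammer (of_nat (Suc k)) n * c) k"
  for c :: "'a::idom"
proof (induction n arbitrary: c)
  case (Suc n)
  have "(pderiv ^^ Suc n) (monom c (Suc n + k)) = (pderiv ^^ n) (monom (of_nat (Suc n + k) * c) (n + k))"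
    by (simp add: funpow_Suc_right pderiv_monom del: funpow.simps)
  also have "\<dots> = monom (pochhammer (of_nat (Suc k)) (Suc n) * c) k"
    unfolding Suc.IH by (simp add: pochhammer_rec' algebra_simps)
  finally show ?case .
qed simp

lemma x_times_x_minus_2_power:
  "[:0, -2, 1::real:] ^ n = (\<Sum>k\<le>n. monom (of_nat (n choose k) * (-2) ^ (n - k)) (n + k))"
proof (intro poly_eq_poly_eq_iff[THEN iffD1] ext)
  fix x :: real
  have "poly ([:0, -2, 1:] ^ n) x = (x * (x + -2)) ^ n"
    by (simp add: poly_power algebra_simps)
  also have "\<dots> = x ^ n * (x + -2) ^ n"
    by (rule power_mult_distrib)
  also have "\<dots> = (\<Sum>k\<le>n. of_nat (n choose k) * (-2) ^ (n - k) * x ^ (n + k))"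
    using binomial_ring[of x "-2" n] by (simp add: sum_distrib_left power_add algebra_simps)
  finally show "poly ([:0, -2, 1:] ^ n) x = poly (\<Sum>k\<le>n. monom (of_nat (n choose k) * (-2) ^ (n - k)) (n + k)) x"
    by (simp add: poly_sum poly_monom)
qed

lemma shifted_legendre_eq_sum:
  "shifted_legendre \<nu> t =
     (-2) ^ \<nu> * (\<Sum>k\<le>\<nu>. of_nat (\<nu> choose k) * pochhammer (of_nat (Suc k)) \<nu> * (-t) ^ k)"
proof -
  have "[:-1, 0, 1:] \<circ>\<^sub>p [:-1, 1:] = [:0, -2, 1::real:]"
    by (simp add: pcompose_pCons)
  then have "rodrigues_poly \<nu> \<circ>\<^sub>p [:-1, 1:]
      = (\<Sum>k\<le>\<nu>. monom (pochhammer (of_nat (Suc k)) \<nu> * (of_nat (\<nu> choose k) * (-2) ^ (\<nu> - k))) k)"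
    by (simp add: rodrigues_poly_def higher_pderiv_pcompose_shift pcompose_power_left
        x_times_x_minus_2_power higher_pderiv_sum higher_pderiv_monom_add)
  moreover have "shifted_legendre \<nu> t = poly (rodrigues_poly \<nu> \<circ>\<^sub>p [:-1, 1:]) (2 * t)"
    by (simp add: shifted_legendre_def poly_pcompose algebra_simps)
  ultimately have "shifted_legendre \<nu> t =
      (\<Sum>k\<le>\<nu>. pochhammer (of_nat (Suc k)) \<nu> * (of_nat (\<nu> choose k) * (-2) ^ (\<nu> - k)) * (2 * t) ^ k)"
    by (simp add: poly_sum poly_monom)
  also have "\<dots> = (\<Sum>k\<le>\<nu>. (-2) ^ \<nu> * (of_nat (\<nu> choose k) * pochhammer (of_nat (Suc k)) \<nu> * (-t) ^ k))"
  proof (rule sum.cong)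
    fix k assume "k \<in> {..\<nu>}"
    then have split: "(-2::real) ^ \<nu> = (-2) ^ (\<nu> - k) * (-2) ^ k"
      by (simp flip: power_add)
    have merge: "(-2) ^ k * (-t) ^ k = (2 * t) ^ k"
      unfolding power_mult_distrib[symmetric] by simp
    show "pochhammer (of_nat (Suc k)) \<nu> * (of_nat (\<nu> choose k) * (-2) ^ (\<nu> - k)) * (2 * t) ^ k
        = (-2) ^ \<nu> * (of_nat (\<nu> choose k) * pochhammer (of_nat (Suc k)) \<nu> * (-t) ^ k)"
      unfolding split merge[symmetric] by (simp only: ac_simps)
  qed simp
  finally show ?thesis
    by (simp only: sum_distrib_left)
qed

section \<open>The series H(y) = J_0(2 sqrt y)\<close>

definition bessel_coeff :: "nat \<Rightarrow> real" where
  "bessel_coeff k = (-1) ^ k / (fact k)\<^sup>2"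

definition bessel_series :: "real \<Rightarrow> real" where
  "bessel_series y = (\<Sum>k. bessel_coeff k * y ^ k)"

lemma bessel_J0_eq_bessel_series: "bessel_J0 t = bessel_series ((t / 2)\<^sup>2)"
  by (simp add: bessel_J0_def bessel_series_def bessel_coeff_def power_mult)

lemma summable_bessel_coeff: "summable (\<lambda>k. bessel_coeff k * x ^ k)"
proof (rule summable_comparison_test'[OF summable_exp[of "\<bar>x\<bar>"]])
  fix k :: nat
  have "(fact k :: real) \<le> (fact k)\<^sup>2"
    by (simp add: power2_eq_square)
  then show "norm (bessel_coeff k * x ^ k) \<le> inverse (fact k) * \<bar>x\<bar> ^ k"
    by (simp add: bessel_coeff_def abs_mult power_abs divide_inverse_commute[symmetric]
        frac_le)
qed

lemma bessel_series_has_derivative: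
  "(bessel_series has_real_derivative (\<Sum>k. diffs bessel_coeff k * y ^ k)) (at y)"
  unfolding bessel_series_def[abs_def]
  by (rule termdiffs_strong_converges_everywhere[OF summable_bessel_coeff])

lemma bessel_series_0 [simp]: "bessel_series 0 = 1"
  using powser_zero[of bessel_coeff] by (simp add: bessel_series_def bessel_coeff_def)

lemma diffs_bessel_coeff: "diffs bessel_coeff k = - ((-1) ^ k / (fact k * fact (Suc k)))"
  by (simp add: diffs_def bessel_coeff_def power2_eq_square field_simps del: fact_Suc)
     (simp add: algebra_simps)

lemma bessel_series_deriv_le:
  assumes "0 \<le> y" "y \<le> 2"
  shows "(\<Sum>k. diffs bessel_coeff k * y ^ k) \<le> -5/18"
proof -
  define b where "b k = y ^ k / (fact k * fact (Suc k))" for k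
  have terms: "diffs bessel_coeff k * y ^ k = - ((-1) ^ k * b k)" for k
    by (simp add: diffs_bessel_coeff b_def)
  have b_nonneg: "0 \<le> b k" for k
    using assms by (simp add: b_def)
  have b_decr: "b (Suc k) \<le> b k" for k
  proof -
    have "b (Suc k) = b k * (y / ((real k + 1) * (real k + 2)))"
      by (simp add: b_def field_simps)
    also have "\<dots> \<le> b k * 1"
    proof (intro mult_left_mono b_nonneg)
      have "(real k + 1) * (real k + 2) = 2 + real k * (real k + 3)"
        by (simp add: algebra_simps)
      moreover have "0 \<le> real k * (real k + 3)"
        by simp
      ultimately have "y \<le> (real k + 1) * (real k + 2)"
        using assms by linarith
      then show "y / ((real k + 1) * (real k + 2)) \<le> 1"
        by (simp add: divide_le_eq_1)
    qed
    finally show ?thesis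
      by simp
  qed
  have "summable (\<lambda>k. norm (diffs bessel_coeff k * y ^ k))"
    using powser_insidea[OF termdiff_converges_all[OF summable_bessel_coeff], of y "y + 1"] assms
    by simp
  then have "summable b"
    using b_nonneg by (simp add: terms abs_mult)
  note leibniz = summable_Leibniz'[OF summable_LIMSEQ_zero[OF this] b_nonneg b_decr]
  have "5/18 \<le> 1 - y/2 + y\<^sup>2/12 - y ^ 3/144"
  proof -
    have "1 - y/2 + y\<^sup>2/12 - y ^ 3/144 - 5/18 = (2 - y) * ((y - 5)\<^sup>2 + 27) / 144"
      by (simp add: algebra_simps power2_eq_square power3_eq_cube)
    also have "\<dots> \<ge> 0"
      using assms by simp
    finally show ?thesis
      by simp
  qed
  also have "1 - y/2 + y\<^sup>2/12 - y ^ 3/144 = (\<Sum>i<2 * 2. (-1) ^ i * b i)"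
    by (simp add: b_def eval_nat_numeral power2_eq_square power3_eq_cube field_simps)
  also have "\<dots> \<le> (\<Sum>k. (-1) ^ k * b k)"
    by (rule leibniz(2))
  also have "\<dots> = - (\<Sum>k. diffs bessel_coeff k * y ^ k)"
    using suminf_minus[OF leibniz(1)] by (simp add: terms)
  finally show ?thesis
    by simp
qed

lemma bessel_series_2_neg: "bessel_series 2 < 0"
proof -
  \<comment> \<open>The terms \<open>2^k/(k!)^2\<close> decrease only from \<open>k = 1\<close> on, so Leibniz is applied to the tail.\<close>
  define b where "b k = (2::real) ^ Suc k / (fact (Suc k))\<^sup>2" for k
  have terms: "bessel_coeff (Suc k) * 2 ^ Suc k = - ((-1) ^ k * b k)" for k
    by (simp add: bessel_coeff_def b_def)
  have b_nonneg: "0 \<le> b k" for k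
    by (simp add: b_def)
  have b_decr: "b (Suc k) \<le> b k" for k
  proof -
    have "b (Suc k) = b k * (2 / (real k + 2)\<^sup>2)"
      by (simp add: b_def field_simps power2_eq_square)
    also have "\<dots> \<le> b k * 1"
    proof (intro mult_left_mono b_nonneg)
      have "(2::real) \<le> 2\<^sup>2"
        by simp
      also have "\<dots> \<le> (real k + 2)\<^sup>2"
        by (intro power_mono) auto
      finally show "2 / (real k + 2)\<^sup>2 \<le> 1"
        by (simp add: divide_le_eq_1)
    qed
    finally show ?thesis
      by simp
  qed
  have "summable (\<lambda>k. norm (bessel_coeff k * 2 ^ k))"
    using powser_insidea[OF summable_bessel_coeff, of 2 3] by simp
  then have "summable (\<lambda>k. norm (bessel_coeff (Suc k) * 2 ^ Suc k))"
    by (rule summable_Suc_iff[THEN iffD2])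
  then have "summable b"
    using b_nonneg unfolding terms by (simp add: abs_mult)
  note leibniz = summable_Leibniz'[OF summable_LIMSEQ_zero[OF this] b_nonneg b_decr]
  have "bessel_series 2 = 1 + (\<Sum>k. bessel_coeff (Suc k) * 2 ^ Suc k)"
    using suminf_split_head[OF summable_bessel_coeff[of 2]]
    by (simp add: bessel_series_def bessel_coeff_def)
  also have "\<dots> = 1 - (\<Sum>k. (-1) ^ k * b k)"
    using suminf_minus[OF leibniz(1)] unfolding terms by simp
  finally have "bessel_series 2 = 1 - (\<Sum>k. (-1) ^ k * b k)" .
  moreover have "43/36 = (\<Sum>i<2 * 2. (-1) ^ i * b i)"
    by (simp add: b_def eval_nat_numeral)
  moreover have "\<dots> \<le> (\<Sum>k. (-1) ^ k * b k)"
    by (rule leibniz(2))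
  ultimately show ?thesis
    by linarith
qed

lemma bessel_series_strict_antimono:
  assumes "0 \<le> x" "x < y" "y \<le> 2"
  shows "bessel_series y < bessel_series x"
proof (rule DERIV_neg_imp_decreasing[OF \<open>x < y\<close>])
  fix z assume "x \<le> z" "z \<le> y"
  with assms have "(\<Sum>k. diffs bessel_coeff k * z ^ k) < 0"
    using bessel_series_deriv_le[of z] by simp
  then show "\<exists>d. (bessel_series has_real_derivative d) (at z) \<and> d < 0"
    using bessel_series_has_derivative by blast
qed

lemma bessel_series_first_zero:
  obtains x where "0 < x" "x < 2" "bessel_series x = 0"
    "\<And>y. 0 \<le> y \<Longrightarrow> y < x \<Longrightarrow> 0 < bessel_series y"
    "\<And>y. x < y \<Longrightarrow> y \<le> 2 \<Longrightarrow> bessel_series y < 0"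
proof -
  have "isCont bessel_series z" for z
    using bessel_series_has_derivative DERIV_isCont by blast
  then obtain x where x: "0 \<le> x" "x \<le> 2" "bessel_series x = 0"
    using IVT2[of bessel_series 2 0 0] bessel_series_2_neg by auto
  moreover have "x \<noteq> 0" "x \<noteq> 2"
    using x bessel_series_2_neg by auto
  ultimately show ?thesis
    using bessel_series_strict_antimono[of _ x] bessel_series_strict_antimono[of x]
    by (intro that) auto
qed

lemma j1_eq_2_sqrt:
  assumes "0 < x" "bessel_series x = 0" "\<And>y. 0 \<le> y \<Longrightarrow> y < x \<Longrightarrow> 0 < bessel_series y"
  shows "j1 = 2 * sqrt x"
  unfolding j1_def
proof (rule cInf_eq_minimum)
  show "2 * sqrt x \<in> {t. 0 < t \<and> bessel_J0 t = 0}"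
    using assms by (simp add: bessel_J0_eq_bessel_series)
next
  fix t assume "t \<in> {t. 0 < t \<and> bessel_J0 t = 0}"
  then have t: "0 < t" "bessel_series ((t / 2)\<^sup>2) = 0"
    by (auto simp: bessel_J0_eq_bessel_series)
  with assms(3)[of "(t / 2)\<^sup>2"] have "x \<le> (t / 2)\<^sup>2"
    by fastforce
  then have "sqrt x \<le> t / 2"
    using real_sqrt_le_mono t(1) by fastforce
  then show "2 * sqrt x \<le> t"
    by simp
qed

section \<open>Rescaling the shifted Legendre polynomials\<close>

definition legendre_factor :: "nat \<Rightarrow> nat \<Rightarrow> real" where
  "legendre_factor \<nu> j = (real \<nu> - real j) * (real \<nu> + 1 + real j) / (real \<nu>)\<^sup>2"

definition legendre_ratio :: "nat \<Rightarrow> nat \<Rightarrow> real" where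
  "legendre_ratio \<nu> k = (\<Prod>j<k. legendre_factor \<nu> j)"

definition scaled_legendre :: "nat \<Rightarrow> real \<Rightarrow> real" where
  "scaled_legendre \<nu> y = (\<Sum>k. legendre_ratio \<nu> k * bessel_coeff k * y ^ k)"

definition scaled_legendre_deriv :: "nat \<Rightarrow> real \<Rightarrow> real" where
  "scaled_legendre_deriv \<nu> y = (\<Sum>k. legendre_ratio \<nu> (Suc k) * diffs bessel_coeff k * y ^ k)"

lemma legendre_ratio_eq_0: "\<nu> < k \<Longrightarrow> legendre_ratio \<nu> k = 0"
  unfolding legendre_ratio_def legendre_factor_def by (rule prod_zero) (auto intro: bexI[of _ \<nu>])

lemma legendre_factor_nonneg: "j \<le> \<nu> \<Longrightarrow> 0 \<le> legendre_factor \<nu> j"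
  by (simp add: legendre_factor_def)

lemma legendre_factor_le_2:
  assumes "0 < \<nu>"
  shows "legendre_factor \<nu> j \<le> 2"
proof -
  have "(real \<nu> - real j) * (real \<nu> + 1 + real j) = (real \<nu>)\<^sup>2 + real \<nu> - real j - (real j)\<^sup>2"
    by (simp add: power2_eq_square algebra_simps)
  moreover have "real \<nu> \<le> (real \<nu>)\<^sup>2"
    using assms by (simp add: power2_eq_square mult_le_cancel_left1)
  ultimately have "(real \<nu> - real j) * (real \<nu> + 1 + real j) \<le> 2 * (real \<nu>)\<^sup>2"
    using zero_le_power2[of "real j"] by linarith
  then show ?thesis
    using assms by (simp add: legendre_factor_def divide_le_eq)
qed

lemma legendre_factor_close:
  assumes "0 < \<nu>" "j < k"
  shows "\<bar>legendre_factor \<nu> j - 1\<bar> \<le> (real k)\<^sup>2 / real \<nu>"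
proof -
  have \<nu>: "1 \<le> real \<nu>" and jk: "1 + real j \<le> real k"
    using assms by auto
  have "legendre_factor \<nu> j - 1 = (real \<nu> - real j - (real j)\<^sup>2) / (real \<nu>)\<^sup>2"
    using \<nu> by (simp add: legendre_factor_def field_simps power2_eq_square)
  moreover have "\<bar>real \<nu> - real j - (real j)\<^sup>2\<bar> \<le> real \<nu> * (real k)\<^sup>2"
  proof -
    have "real j + (real j)\<^sup>2 \<le> (1 + real j)\<^sup>2"
      by (simp add: power2_eq_square algebra_simps)
    also have "\<dots> \<le> (real k)\<^sup>2"
      using jk by (intro power_mono) auto
    finally have "real j + (real j)\<^sup>2 \<le> (real k)\<^sup>2" .
    moreover have "(real k)\<^sup>2 \<le> real \<nu> * (real k)\<^sup>2" "real \<nu> \<le> real \<nu> * (real k)\<^sup>2"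
      using \<nu> jk by (simp_all add: mult_le_cancel_right1 mult_le_cancel_left1 one_le_power)
    ultimately show ?thesis
      using zero_le_power2[of "real j"] unfolding abs_le_iff by linarith
  qed
  ultimately show ?thesis
    using \<nu> by (simp add: abs_divide power2_eq_square divide_le_eq mult_ac)
qed

lemma legendre_ratio_nonneg: "0 \<le> legendre_ratio \<nu> k"
proof (cases "k \<le> \<nu>")
  case True
  then show ?thesis
    unfolding legendre_ratio_def by (intro prod_nonneg legendre_factor_nonneg) auto
qed (simp add: legendre_ratio_eq_0)

lemma legendre_ratio_binomial:
  "legendre_ratio \<nu> k * fact \<nu> =
     of_nat (\<nu> choose k) * pochhammer (of_nat (Suc k)) \<nu> * (fact k)\<^sup>2 / real \<nu> ^ (2 * k)"
proof -
  have falling: "(\<Prod>j<k. real \<nu> - real j) = of_nat (\<nu> choose k) * fact k"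
    by (simp add: binomial_gbinomial gbinomial_mult_fact' atLeast0LessThan)
  have "fact k * pochhammer (of_nat (Suc k)) \<nu> = (fact (k + \<nu>) :: real)"
    using pochhammer_product'[of "1::real" k \<nu>] by (simp add: pochhammer_fact add_ac)
  also have "\<dots> = fact \<nu> * pochhammer (of_nat (Suc \<nu>)) k"
    using pochhammer_product'[of "1::real" \<nu> k] by (simp add: pochhammer_fact add_ac)
  finally have rising: "(\<Prod>j<k. real \<nu> + 1 + real j) * fact \<nu> = fact k * pochhammer (of_nat (Suc k)) \<nu>"
    by (simp add: pochhammer_prod atLeast0LessThan add_ac)
  have "legendre_ratio \<nu> k * fact \<nu>
      = (\<Prod>j<k. real \<nu> - real j) * ((\<Prod>j<k. real \<nu> + 1 + real j) * fact \<nu>) / real \<nu> ^ (2 * k)"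
    by (simp add: legendre_ratio_def legendre_factor_def prod_dividef prod.distrib power_mult)
  then show ?thesis
    unfolding falling rising by (simp add: power2_eq_square)
qed

lemma shifted_legendre_eq_scaled:
  assumes "\<nu> > 0"
  shows "shifted_legendre \<nu> p = (-2) ^ \<nu> * fact \<nu> * scaled_legendre \<nu> ((real \<nu>)\<^sup>2 * p)"
proof -
  let ?y = "(real \<nu>)\<^sup>2 * p"
  have "fact \<nu> * (legendre_ratio \<nu> k * bessel_coeff k * ?y ^ k)
      = of_nat (\<nu> choose k) * pochhammer (of_nat (Suc k)) \<nu> * (-p) ^ k" for k
  proof -
    have "fact \<nu> * (legendre_ratio \<nu> k * bessel_coeff k * ?y ^ k)
        = (legendre_ratio \<nu> k * fact \<nu>) * ((-1) ^ k * ?y ^ k / (fact k)\<^sup>2)"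
      by (simp add: bessel_coeff_def)
    also have "\<dots> = of_nat (\<nu> choose k) * pochhammer (of_nat (Suc k)) \<nu> * ((-1) ^ k * ?y ^ k / real \<nu> ^ (2 * k))"
      unfolding legendre_ratio_binomial by simp
    also have "(-1) ^ k * ?y ^ k / real \<nu> ^ (2 * k) = (-p) ^ k"
    proof -
      have "?y ^ k = real \<nu> ^ (2 * k) * p ^ k"
        by (simp only: power_mult power_mult_distrib)
      with assms show ?thesis
        by (simp add: power_minus[of p])
    qed
    finally show ?thesis .
  qed
  then have "shifted_legendre \<nu> p = (-2) ^ \<nu> * fact \<nu> * (\<Sum>k\<le>\<nu>. legendre_ratio \<nu> k * bessel_coeff k * ?y ^ k)"
    unfolding shifted_legendre_eq_sum by (simp only: sum_distrib_left mult.assoc)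
  also have "(\<Sum>k\<le>\<nu>. legendre_ratio \<nu> k * bessel_coeff k * ?y ^ k) = scaled_legendre \<nu> ?y"
    unfolding scaled_legendre_def by (rule suminf_finite[symmetric]) (auto simp: legendre_ratio_eq_0)
  finally show ?thesis .
qed

lemma abs_prod_minus_1_le:
  fixes a :: "'i \<Rightarrow> real"
  assumes "\<And>j. j \<in> A \<Longrightarrow> \<bar>a j\<bar> \<le> 2"
  shows "\<bar>prod a A - 1\<bar> \<le> 2 ^ card A / 2 * (\<Sum>j\<in>A. \<bar>a j - 1\<bar>)"
proof -
  have "\<bar>prod a A - 1\<bar> / 2 ^ card A = \<bar>(\<Prod>j\<in>A. a j / 2) - (\<Prod>j\<in>A. 1 / 2)\<bar>"
    by (simp add: prod_dividef power_one_over abs_divide flip: diff_divide_distrib)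
  also have "\<dots> \<le> (\<Sum>j\<in>A. \<bar>a j / 2 - 1 / 2\<bar>)"
    using norm_prod_diff[of A "\<lambda>j. a j / 2" "\<lambda>_. 1 / 2"] assms by simp
  also have "\<dots> = (\<Sum>j\<in>A. \<bar>a j - 1\<bar>) / 2"
    by (simp add: abs_divide sum_divide_distrib flip: diff_divide_distrib)
  finally show ?thesis
    by (simp add: field_simps)
qed

lemma cube_le_eight_power: "(real k) ^ 3 \<le> 8 ^ k"
proof -
  have "(real k) ^ 3 \<le> (2 ^ k) ^ 3"
    by (intro power_mono) (auto intro: less_imp_le)
  also have "\<dots> = (2 ^ 3) ^ k"
    by (simp only: power_mult[symmetric] mult.commute)
  also have "\<dots> = (8::real) ^ k"
    by simp
  finally show ?thesis .
qed

lemma legendre_ratio_close: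
  assumes "0 < \<nu>"
  shows "\<bar>legendre_ratio \<nu> k - 1\<bar> \<le> 16 ^ k / real \<nu>"
proof (cases "k \<le> \<nu>")
  case True
  have "\<bar>legendre_factor \<nu> j\<bar> \<le> 2" if "j < k" for j
    using that True legendre_factor_nonneg[of j \<nu>] legendre_factor_le_2[OF assms] by simp
  then have "\<bar>legendre_ratio \<nu> k - 1\<bar> \<le> 2 ^ k / 2 * (\<Sum>j<k. \<bar>legendre_factor \<nu> j - 1\<bar>)"
    unfolding legendre_ratio_def using abs_prod_minus_1_le[of "{..<k}"] by simp
  also have "\<dots> \<le> 2 ^ k / 2 * (\<Sum>j<k. (real k)\<^sup>2 / real \<nu>)"
    using legendre_factor_close[OF assms] by (intro mult_left_mono sum_mono) auto
  also have "\<dots> = 2 ^ k * (real k) ^ 3 / real \<nu> / 2"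
    by (simp add: power3_eq_cube power2_eq_square)
  also have "\<dots> \<le> 2 ^ k * (real k) ^ 3 / real \<nu>"
    using assms by (simp add: field_simps)
  also have "\<dots> \<le> 2 ^ k * 8 ^ k / real \<nu>"
    by (intro divide_right_mono mult_left_mono cube_le_eight_power) auto
  finally show ?thesis
    unfolding power_mult_distrib[symmetric] by simp
next
  case False
  then have "\<nu> < 2 ^ k"
    using less_exp[of k] by linarith
  then have "real \<nu> \<le> 2 ^ k"
    by simp
  also have "\<dots> \<le> 16 ^ k"
    by (intro power_mono) auto
  finally show ?thesis
    using False assms by (simp add: legendre_ratio_eq_0 le_divide_eq)
qed

lemma powser_perturbation_bound:
  fixes a r :: "nat \<Rightarrow> real"
  assumes entire: "\<And>x. summable (\<lambda>k. a k * x ^ k)"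
    and r: "\<And>k. \<bar>r k - 1\<bar> \<le> C * B ^ k" and "0 \<le> B" and y: "\<bar>y\<bar> \<le> R"
  shows "\<bar>(\<Sum>k. r k * a k * y ^ k) - (\<Sum>k. a k * y ^ k)\<bar> \<le> C * (\<Sum>k. \<bar>a k\<bar> * (B * R) ^ k)"
proof -
  have "0 \<le> R"
    using y by linarith
  then have abs_summable: "summable (\<lambda>k. \<bar>a k\<bar> * (B * R) ^ k)"
    using powser_insidea[OF entire[of "B * R + 1"], of "B * R"] \<open>0 \<le> B\<close>
    by (simp add: abs_mult power_abs)
  have bound: "\<bar>(r k - 1) * (a k * y ^ k)\<bar> \<le> C * (\<bar>a k\<bar> * (B * R) ^ k)" for k
  proof -
    have "\<bar>(r k - 1) * (a k * y ^ k)\<bar> = \<bar>r k - 1\<bar> * (\<bar>a k\<bar> * \<bar>y\<bar> ^ k)"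
      by (simp add: abs_mult power_abs)
    also have "\<dots> \<le> C * B ^ k * (\<bar>a k\<bar> * R ^ k)"
      using r[of k] y by (intro mult_mono mult_left_mono power_mono) auto
    also have "\<dots> = C * (\<bar>a k\<bar> * (B * R) ^ k)"
      by (simp add: power_mult_distrib)
    finally show ?thesis .
  qed
  then have summable_diff: "summable (\<lambda>k. (r k - 1) * (a k * y ^ k))"
    by (intro summable_comparison_test'[OF summable_mult[OF abs_summable, of C]]) simp
  have "(\<Sum>k. r k * a k * y ^ k) = (\<Sum>k. (r k - 1) * (a k * y ^ k)) + (\<Sum>k. a k * y ^ k)"
    unfolding suminf_add[OF summable_diff entire] by (simp add: algebra_simps)
  then have "\<bar>(\<Sum>k. r k * a k * y ^ k) - (\<Sum>k. a k * y ^ k)\<bar> = \<bar>\<Sum>k. (r k - 1) * (a k * y ^ k)\<bar>"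
    by simp
  also have "\<dots> \<le> (\<Sum>k. C * (\<bar>a k\<bar> * (B * R) ^ k))"
    by (rule norm_suminf_le[where 'a=real, unfolded real_norm_def]) (use bound summable_mult[OF abs_summable] in auto)
  also have "\<dots> = C * (\<Sum>k. \<bar>a k\<bar> * (B * R) ^ k)"
    by (rule suminf_mult[OF abs_summable])
  finally show ?thesis .
qed

lemma summable_scaled_legendre: "summable (\<lambda>k. legendre_ratio \<nu> k * bessel_coeff k * x ^ k)"
  by (rule summable_finite[of "{..\<nu>}"]) (auto simp: legendre_ratio_eq_0)

lemma scaled_legendre_has_derivative:
  "(scaled_legendre \<nu> has_real_derivative scaled_legendre_deriv \<nu> y) (at y)"
proof -
  have "(scaled_legendre \<nu> has_real_derivative
      (\<Sum>k. diffs (\<lambda>k. legendre_ratio \<nu> k * bessel_coeff k) k * y ^ k)) (at y)"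
    unfolding scaled_legendre_def[abs_def]
    by (rule termdiffs_strong_converges_everywhere[OF summable_scaled_legendre])
  then show ?thesis
    by (simp add: scaled_legendre_deriv_def diffs_def mult_ac)
qed

lemma scaled_legendre_pos_of_nonpos:
  assumes "y \<le> 0"
  shows "0 < scaled_legendre \<nu> y"
proof -
  have "0 \<le> legendre_ratio \<nu> k * bessel_coeff k * y ^ k" for k
  proof -
    have "bessel_coeff k * y ^ k = (-y) ^ k / (fact k)\<^sup>2"
      by (simp add: bessel_coeff_def power_minus[of y])
    then show ?thesis
      using assms legendre_ratio_nonneg[of \<nu> k] by (simp add: mult.assoc)
  qed
  then have "(\<Sum>k<1. legendre_ratio \<nu> k * bessel_coeff k * y ^ k) \<le> scaled_legendre \<nu> y"
    unfolding scaled_legendre_def by (intro sum_le_suminf summable_scaled_legendre) auto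
  then show ?thesis
    by (simp add: legendre_ratio_def bessel_coeff_def)
qed

lemma scaled_legendre_tendsto: "(\<lambda>\<nu>. scaled_legendre \<nu> y) \<longlonglongrightarrow> bessel_series y"
proof (rule LIM_zero_cancel, rule Lim_null_comparison)
  define K where "K = (\<Sum>k. \<bar>bessel_coeff k\<bar> * (16 * \<bar>y\<bar>) ^ k)"
  show "\<forall>\<^sub>F \<nu> in sequentially. norm (scaled_legendre \<nu> y - bessel_series y) \<le> 1 / real \<nu> * K"
    using eventually_gt_at_top[of 0]
  proof eventually_elim
    case (elim \<nu>)
    then show ?case
      using powser_perturbation_bound[OF summable_bessel_coeff, of "legendre_ratio \<nu>" "1 / real \<nu>" 16 y "\<bar>y\<bar>"]
        legendre_ratio_close[OF elim]
      by (simp add: scaled_legendre_def bessel_series_def K_def)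
  qed
  show "(\<lambda>\<nu>. 1 / real \<nu> * K) \<longlonglongrightarrow> 0"
    by (intro tendsto_mult_left_zero lim_1_over_n)
qed

lemma eventually_scaled_legendre_deriv_neg:
  "\<forall>\<^sub>F \<nu> in sequentially. \<forall>y\<in>{0..2}. scaled_legendre_deriv \<nu> y < 0"
proof -
  define K where "K = (\<Sum>k. \<bar>diffs bessel_coeff k\<bar> * (16 * 2) ^ k)"
  have "(\<lambda>\<nu>. 16 * K * (1 / real \<nu>)) \<longlonglongrightarrow> 0"
    by (intro tendsto_mult_right_zero lim_1_over_n)
  then have "\<forall>\<^sub>F \<nu> in sequentially. 16 * K * (1 / real \<nu>) < 5/18"
    by (rule order_tendstoD) simp
  with eventually_gt_at_top[of 0] show ?thesis
  proof eventually_elim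
    case (elim \<nu>)
    show ?case
    proof
      fix y :: real assume y: "y \<in> {0..2}"
      have "\<bar>legendre_ratio \<nu> (Suc k) - 1\<bar> \<le> 16 / real \<nu> * 16 ^ k" for k
        using legendre_ratio_close[OF elim(1), of "Suc k"] by simp
      then have "\<bar>scaled_legendre_deriv \<nu> y - (\<Sum>k. diffs bessel_coeff k * y ^ k)\<bar> \<le> 16 / real \<nu> * K"
        unfolding K_def scaled_legendre_deriv_def using y
        by (intro powser_perturbation_bound termdiff_converges_all summable_bessel_coeff) auto
      then show "scaled_legendre_deriv \<nu> y < 0"
        using bessel_series_deriv_le[of y] y elim(2) by auto
    qed
  qed
qed

section \<open>Convergence of the smallest zero\<close>

lemma finite_gl_support:
  assumes "0 < \<nu>"
  shows "finite (gl_support \<nu>)"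
proof -
  have "shifted_legendre \<nu> 0 \<noteq> 0"
    using shifted_legendre_eq_scaled[OF assms, of 0] scaled_legendre_pos_of_nonpos[of 0 \<nu>] by simp
  then have "rodrigues_poly \<nu> \<noteq> 0"
    by (auto simp: shifted_legendre_def)
  then have "finite ((\<lambda>u. (u + 1) / 2) ` {u. poly (rodrigues_poly \<nu>) u = 0})"
    by (intro finite_imageI poly_roots_finite)
  moreover have "gl_support \<nu> \<subseteq> (\<lambda>u. (u + 1) / 2) ` {u. poly (rodrigues_poly \<nu>) u = 0}"
  proof
    fix p assume "p \<in> gl_support \<nu>"
    then have "2 * p - 1 \<in> {u. poly (rodrigues_poly \<nu>) u = 0}"
      by (simp add: gl_support_def shifted_legendre_def)
    then show "p \<in> (\<lambda>u. (u + 1) / 2) ` {u. poly (rodrigues_poly \<nu>) u = 0}"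
      by (rule image_eqI[rotated]) simp
  qed
  ultimately show ?thesis
    by (rule finite_subset[rotated])
qed

lemma p0_eq_scaled_zero:
  assumes "0 < \<nu>" "0 < y" "y < (real \<nu>)\<^sup>2" and zero: "scaled_legendre \<nu> y = 0"
    and deriv: "(scaled_legendre \<nu> has_real_derivative d) (at y)" "d \<noteq> 0"
    and first: "\<And>z. z < y \<Longrightarrow> scaled_legendre \<nu> z \<noteq> 0"
  shows "p0 (2 * \<nu>) = y / (real \<nu>)\<^sup>2"
proof -
  define p where "p = y / (real \<nu>)\<^sup>2"
  have p: "0 < p" "p < 1" "(real \<nu>)\<^sup>2 * p = y"
    using assms by (simp_all add: p_def)
  have L: "shifted_legendre \<nu> = (\<lambda>p. (-2) ^ \<nu> * fact \<nu> * scaled_legendre \<nu> ((real \<nu>)\<^sup>2 * p))"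
    using shifted_legendre_eq_scaled[OF assms(1)] by blast
  have "(shifted_legendre \<nu> has_real_derivative (-2) ^ \<nu> * fact \<nu> * (d * (real \<nu>)\<^sup>2)) (at p)"
    unfolding L using deriv(1) p(3)
    by (auto intro!: derivative_eq_intros DERIV_chain2[where f = "scaled_legendre \<nu>"])
  then have "deriv (shifted_legendre \<nu>) p \<noteq> 0"
    using DERIV_imp_deriv deriv(2) assms(1) by fastforce
  then have "gl_weight \<nu> p > 0"
    using p by (simp add: gl_weight_def)
  moreover have "p \<in> gl_support \<nu>"
    using zero p by (simp add: gl_support_def L)
  moreover have "p \<le> q" if "q \<in> gl_support \<nu>" for q
  proof (rule ccontr)
    assume "\<not> p \<le> q"
    then have "(real \<nu>)\<^sup>2 * q < (real \<nu>)\<^sup>2 * p"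
      using assms(1) by (intro mult_strict_left_mono) auto
    then have "(real \<nu>)\<^sup>2 * q < y"
      using p(3) by simp
    with that first show False
      by (simp add: gl_support_def L)
  qed
  ultimately show ?thesis
    unfolding p0_def p_def[symmetric] using finite_gl_support[OF assms(1)]
    by (intro Min_eqI) auto
qed

lemma rescaled_p0_between:
  assumes "0 \<le> a" "a < b" "b \<le> 2" "2 \<le> \<nu>"
    and sign_change: "0 < scaled_legendre \<nu> a" "scaled_legendre \<nu> b < 0"
    and deriv_neg: "\<forall>y\<in>{0..2}. scaled_legendre_deriv \<nu> y < 0"
  shows "a < (real \<nu>)\<^sup>2 * p0 (2 * \<nu>) \<and> (real \<nu>)\<^sup>2 * p0 (2 * \<nu>) < b"
proof -
  let ?F = "scaled_legendre \<nu>"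
  have decreasing: "?F w < ?F z" if "0 \<le> z" "z < w" "w \<le> 2" for z w
    using that deriv_neg scaled_legendre_has_derivative
    by (intro DERIV_neg_imp_decreasing[OF \<open>z < w\<close>]) fastforce
  have "isCont ?F z" for z
    using scaled_legendre_has_derivative DERIV_isCont by blast
  then obtain y where y: "a \<le> y" "y \<le> b" "?F y = 0"
    using IVT2[of ?F b 0 a] sign_change \<open>a < b\<close> by auto
  then have "a < y" "y < b"
    using sign_change by (auto simp: order.order_iff_strict)
  have "p0 (2 * \<nu>) = y / (real \<nu>)\<^sup>2"
  proof (rule p0_eq_scaled_zero)
    show "0 < \<nu>" "0 < y"
      using assms(1,4) \<open>a < y\<close> by auto
    have "(2::real) * 2 \<le> real \<nu> * real \<nu>"
      using assms(4) by (intro mult_mono) auto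
    then show "y < (real \<nu>)\<^sup>2"
      using \<open>y < b\<close> assms(3) by (simp add: power2_eq_square)
    show "?F y = 0" "(?F has_real_derivative scaled_legendre_deriv \<nu> y) (at y)"
      using y(3) scaled_legendre_has_derivative by auto
    have "y \<in> {0..2}"
      using y assms(1,3) by auto
    then show "scaled_legendre_deriv \<nu> y \<noteq> 0"
      using deriv_neg by force
    show "?F z \<noteq> 0" if "z < y" for z
    proof (cases "z \<le> 0")
      case True
      then show ?thesis
        using scaled_legendre_pos_of_nonpos[of z \<nu>] by simp
    next
      case False
      then show ?thesis
        using decreasing[of z y] that y \<open>y < b\<close> assms(3) by auto
    qed
  qed
  then show ?thesis
    using assms(4) \<open>a < y\<close> \<open>y < b\<close> by simp
qed

lemma eventually_rescaled_p0_between: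
  assumes "0 \<le> a" "a < b" "b \<le> 2" "0 < bessel_series a" "bessel_series b < 0"
  shows "\<forall>\<^sub>F \<nu> in sequentially. a < (real \<nu>)\<^sup>2 * p0 (2 * \<nu>) \<and> (real \<nu>)\<^sup>2 * p0 (2 * \<nu>) < b"
proof -
  have "\<forall>\<^sub>F \<nu> in sequentially. 0 < scaled_legendre \<nu> a"
    using scaled_legendre_tendsto assms(4) by (rule order_tendstoD)
  moreover have "\<forall>\<^sub>F \<nu> in sequentially. scaled_legendre \<nu> b < 0"
    using scaled_legendre_tendsto assms(5) by (rule order_tendstoD)
  ultimately show ?thesis
    using eventually_scaled_legendre_deriv_neg eventually_ge_at_top[of 2]
    by eventually_elim (rule rescaled_p0_between[OF assms(1-3)])
qed

lemma rescaled_p0_tendsto: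
  assumes "0 < x" "x < 2"
    and pos: "\<And>y. 0 \<le> y \<Longrightarrow> y < x \<Longrightarrow> 0 < bessel_series y"
    and neg: "\<And>y. x < y \<Longrightarrow> y \<le> 2 \<Longrightarrow> bessel_series y < 0"
  shows "(\<lambda>\<nu>. (real \<nu>)\<^sup>2 * p0 (2 * \<nu>)) \<longlonglongrightarrow> x"
proof (rule order_tendstoI)
  fix a assume "a < x"
  then have "\<forall>\<^sub>F \<nu> in sequentially. max a 0 < (real \<nu>)\<^sup>2 * p0 (2 * \<nu>) \<and> (real \<nu>)\<^sup>2 * p0 (2 * \<nu>) < 2"
    using assms by (intro eventually_rescaled_p0_between pos neg) auto
  then show "\<forall>\<^sub>F \<nu> in sequentially. a < (real \<nu>)\<^sup>2 * p0 (2 * \<nu>)"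
    by eventually_elim simp
next
  fix b assume "x < b"
  then have "\<forall>\<^sub>F \<nu> in sequentially. 0 < (real \<nu>)\<^sup>2 * p0 (2 * \<nu>) \<and> (real \<nu>)\<^sup>2 * p0 (2 * \<nu>) < min b 2"
    using assms by (intro eventually_rescaled_p0_between pos neg) auto
  then show "\<forall>\<^sub>F \<nu> in sequentially. (real \<nu>)\<^sup>2 * p0 (2 * \<nu>) < b"
    by eventually_elim simp
qed

lemma sigma_rescaled_tendsto:
  assumes q: "(\<lambda>\<nu>. (real \<nu>)\<^sup>2 * p \<nu>) \<longlonglongrightarrow> x" and "0 < x"
  shows "(\<lambda>\<nu>. sigma (p \<nu>) / real (2 * \<nu>)) \<longlonglongrightarrow> 1 / (2 * sqrt x)"
proof -
  define q where "q \<nu> = (real \<nu>)\<^sup>2 * p \<nu>" for \<nu>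
  have lim: "(\<lambda>\<nu>. sqrt ((1 - q \<nu> * (1 / real \<nu>)\<^sup>2) / q \<nu>) / 2) \<longlonglongrightarrow> sqrt ((1 - x * 0\<^sup>2) / x) / 2"
    using q \<open>0 < x\<close> unfolding q_def by (intro tendsto_intros lim_1_over_n) auto
  have val: "sqrt ((1 - x * 0\<^sup>2) / x) / 2 = 1 / (2 * sqrt x)"
    by (simp add: real_sqrt_divide)
  have "\<forall>\<^sub>F \<nu> in sequentially. sqrt ((1 - q \<nu> * (1 / real \<nu>)\<^sup>2) / q \<nu>) / 2 = sigma (p \<nu>) / real (2 * \<nu>)"
    using order_tendstoD(1)[OF q \<open>0 < x\<close>] eventually_gt_at_top[of 0]
  proof eventually_elim
    case (elim \<nu>)
    then have "p \<nu> \<noteq> 0"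
      by (auto simp: q_def)
    with elim have p: "q \<nu> * (1 / real \<nu>)\<^sup>2 = p \<nu>" and "(1 - p \<nu>) / p \<nu> = (real \<nu>)\<^sup>2 * ((1 - p \<nu>) / q \<nu>)"
      by (auto simp: q_def field_simps power2_eq_square)
    then have "sigma (p \<nu>) = sqrt ((real \<nu>)\<^sup>2) * sqrt ((1 - p \<nu>) / q \<nu>)"
      unfolding sigma_def by (simp only: real_sqrt_mult)
    then show ?case
      using p elim by simp
  qed
  from Lim_transform_eventually[OF lim this] show ?thesis
    unfolding val .
qed

theorem proposition7:
  shows "((\<lambda>\<nu>::nat. sigma (p0 (2 * \<nu>)) / real (2 * \<nu>)) \<longlongrightarrow> 1 / j1) at_top"
proof -
  obtain x where x: "0 < x" "x < 2" "bessel_series x = 0"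
    "\<And>y. 0 \<le> y \<Longrightarrow> y < x \<Longrightarrow> 0 < bessel_series y"
    "\<And>y. x < y \<Longrightarrow> y \<le> 2 \<Longrightarrow> bessel_series y < 0"
    using bessel_series_first_zero by blast
  have "j1 = 2 * sqrt x"
    using x by (intro j1_eq_2_sqrt)
  moreover have "(\<lambda>\<nu>. (real \<nu>)\<^sup>2 * p0 (2 * \<nu>)) \<longlonglongrightarrow> x"
    using x by (intro rescaled_p0_tendsto)
  ultimately show ?thesis
    using sigma_rescaled_tendsto[OF _ \<open>0 < x\<close>] by simp
qed

end
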